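(* Let $S=\{p,q\}$ be a set of $m=2$ discrete probability distributions, and let $\mathcal G_S$ be the output of the greedy coupling algorithm on $S$. Then $$H(\mathcal G_S)\le H(\textsc{Profile}_S)+\frac{\log_2 e}{e}.$$
   Context: Distributions are finite vectors of nonnegative reals summing to $1$, with states sorted in non-increasing order. Greedy coupling algorithm: maintain the (remaining) masses of the states of each distribution in $S$. Repeatedly: let $r=\min_{p\in S}\max_j p(j)$ (minimum over distributions of their largest remaining state); if $r=0$ stop; otherwise append $r$ as the next state of $\mathcal G_S$ and subtract $r$ from the largest remaining state of every distribution in $S$ (ties broken arbitrarily). $\mathcal G_S$ is the resulting sequence of state masses (a probability distribution, and a valid coupling), with $H(\mathcal G_S)=\sum_t \mathcal G_S(t)\log_2(1/\mathcal G_S(t))$. For a distribution $p$, $\textsc{Sketch}_p:(0,1]\to\mathbb R$ is $\textsc{Sketch}_p(x)=p(i)$ for $x\in(\sum_{j>i}p(j),\sum_{j\ge i}p(j)]$; $\textsc{Profile}_S(x)=\min_{p\in S}\textsc{Sketch}_p(x)$; and $H(\textsc{Profile}_S)=\int_0^{1}\log_2(1/\textsc{Profile}_S(x))\,dx$. *)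

theory Defs
  imports "HOL-Analysis.Analysis"
begin

definition is_distr :: "real list \<Rightarrow> bool" where
  "is_distr p \<longleftrightarrow> (\<forall>x\<in>set p. 0 \<le> x) \<and> sum_list p = 1 \<and> sorted_wrt (\<ge>) p"

text \<open>Ties in choosing the largest
  remaining state are broken arbitrarily (every admissible choice is allowed).\<close>
inductive greedy :: "real list list \<Rightarrow> real list \<Rightarrow> bool" where
  stop: "(MIN p\<in>set S. Max (set p)) = 0 \<Longrightarrow> greedy S []"
| step: "r = (MIN p\<in>set S. Max (set p)) \<Longrightarrow> r \<noteq> 0 \<Longrightarrow>
         list_all2 (\<lambda>p p'. \<exists>i<length p. p ! i = Max (set p) \<and> p' = p[i := p ! i - r]) S S' \<Longrightarrow>
         greedy S' G \<Longrightarrow> greedy S (r # G)"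

definition entropy :: "real list \<Rightarrow> real" where
  "entropy G = sum_list (map (\<lambda>g. g * log 2 (1 / g)) G)"

text \<open>Sketch_p(x) = p(i) for x in (sum_{j>i} p(j), sum_{j>=i} p(j)] (0-indexed).\<close>
definition sketch :: "real list \<Rightarrow> real \<Rightarrow> real" where
  "sketch p x = p ! (THE i. i < length p \<and> sum_list (drop (Suc i) p) < x \<and> x \<le> sum_list (drop i p))"

definition profile :: "real list set \<Rightarrow> real \<Rightarrow> real" where
  "profile S x = (MIN p\<in>S. sketch p x)"

definition profile_entropy :: "real list set \<Rightarrow> real" where
  "profile_entropy S = integral {0..1} (\<lambda>x. log 2 (1 / profile S x))"

end

theory Submission
  imports Defs
begin

text \<open>For a threshold \<open>v\<close> let \<open>M\<^sub>p(v)\<close> be the total mass of the states of \<open>p\<close> of size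
  at least \<open>v\<close>. Integrating \<open>1 - M\<^sub>p(v)\<close> against \<open>dv/v\<close> over \<open>(0,1]\<close> gives \<open>ln 2 \<cdot> H(p)\<close>,
  and since \<open>Profile(x) \<ge> v\<close> iff \<open>x > 1 - min (M\<^sub>p(v)) (M\<^sub>q(v))\<close>, the same integral of
  \<open>1 - min (M\<^sub>p(v)) (M\<^sub>q(v))\<close> gives \<open>ln 2 \<cdot> H(Profile)\<close>. A greedy step outputs
  \<open>r = min a b\<close>, where \<open>a\<close>, \<open>b\<close> are the largest states, and lowers \<open>min (M\<^sub>p(v)) (M\<^sub>q(v))\<close>
  by at most \<open>r\<close> for \<open>v \<le> r\<close> and not at all for \<open>v > r\<close>, except for an extra loss of
  \<open>\<rho> = |a - b|\<close> when \<open>\<rho> < v \<le> r\<close>. These extra losses contribute \<open>\<rho> ln (r / \<rho>) \<le> r / e\<close>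
  to the integral, and the outputs \<open>r\<close> sum to 1.\<close>

section \<open>Masses above and below a threshold\<close>

definition mass_from :: "real list \<Rightarrow> real \<Rightarrow> real" where
  "mass_from xs v = (\<Sum>a\<leftarrow>xs. if v \<le> a then a else 0)"

definition mass_below :: "real list \<Rightarrow> real \<Rightarrow> real" where
  "mass_below xs v = (\<Sum>a\<leftarrow>xs. if a < v then a else 0)"

definition gap_mass :: "(real \<times> real) list \<Rightarrow> real \<Rightarrow> real" where
  "gap_mass E v = (\<Sum>(r, \<rho>)\<leftarrow>E. if \<rho> < v \<and> v \<le> r then \<rho> else 0)"

lemma sum_list_list_update:
  fixes xs :: "'a::ab_group_add list"
  shows "i < length xs \<Longrightarrow> sum_list (xs[i := y]) = sum_list xs - xs ! i + y"
  by (induction xs arbitrary: i) (auto split: nat.splits)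

lemma mass_from_Nil [simp]: "mass_from [] v = 0"
  by (simp add: mass_from_def)

lemma mass_from_Cons [simp]: "mass_from (a # xs) v = (if v \<le> a then a else 0) + mass_from xs v"
  by (simp add: mass_from_def)

lemma mass_from_append: "mass_from (xs @ ys) v = mass_from xs v + mass_from ys v"
  by (simp add: mass_from_def)

lemma mass_from_list_update:
  "i < length xs \<Longrightarrow>
    mass_from (xs[i := y]) v = mass_from xs v - (if v \<le> xs ! i then xs ! i else 0) + (if v \<le> y then y else 0)"
  unfolding mass_from_def by (simp add: map_update sum_list_list_update)

lemma mass_from_nonneg: "0 \<le> v \<Longrightarrow> 0 \<le> mass_from xs v"
  by (induction xs) auto

lemma mass_from_eq_0: "\<forall>a\<in>set xs. a < v \<Longrightarrow> mass_from xs v = 0"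
  by (induction xs) auto

lemma mass_from_eq_0_if_Max_less: "xs \<noteq> [] \<Longrightarrow> Max (set xs) < v \<Longrightarrow> mass_from xs v = 0"
  by (intro mass_from_eq_0) (auto intro: le_less_trans[OF Max_ge])

lemma mass_from_eq_sum_list: "\<forall>a\<in>set xs. v \<le> a \<Longrightarrow> mass_from xs v = sum_list xs"
  by (induction xs) auto

lemma mass_from_le_sum_list: "\<forall>a\<in>set xs. 0 \<le> a \<Longrightarrow> mass_from xs v \<le> sum_list xs"
  by (induction xs) auto

lemma mass_below_add_mass_from: "mass_below xs v + mass_from xs v = sum_list xs"
  by (induction xs) (auto simp: mass_below_def)

lemma gap_mass_nonneg: "\<forall>(r, \<rho>)\<in>set E. 0 \<le> \<rho> \<Longrightarrow> 0 \<le> gap_mass E v"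
  unfolding gap_mass_def by (induction E) auto

section \<open>The greedy coupling of two lists\<close>

lemma greedy_pair_induct [consumes 1, case_names stop step]:
  assumes "greedy [A, B] G"
    and "\<And>A B. min (Max (set A)) (Max (set B)) = 0 \<Longrightarrow> P A B []"
    and "\<And>A B G i j r. r = min (Max (set A)) (Max (set B)) \<Longrightarrow> r \<noteq> 0 \<Longrightarrow>
      i < length A \<Longrightarrow> A ! i = Max (set A) \<Longrightarrow> j < length B \<Longrightarrow> B ! j = Max (set B) \<Longrightarrow>
      P (A[i := A ! i - r]) (B[j := B ! j - r]) G \<Longrightarrow> P A B (r # G)"
  shows "P A B G"
proof -
  have "S = [A, B] \<Longrightarrow> P A B G" if "greedy S G" for S
    using that
  proof (induction arbitrary: A B rule: greedy.induct)
    case stop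
    then show ?case by (auto intro: assms(2))
  next
    case step
    then show ?case by (auto simp: list_all2_Cons1 intro: assms(3))
  qed
  then show ?thesis using assms(1) by blast
qed

lemma Max_eq_0_imp_sum_list_eq_0:
  assumes "xs \<noteq> []" "\<forall>a\<in>set xs. 0 \<le> a" "Max (set xs) = 0"
  shows "sum_list xs = 0"
proof -
  have "\<forall>a\<in>set xs. a = 0"
    using assms by (metis List.finite_set Max_ge order_antisym)
  then show ?thesis by (induction xs) auto
qed

lemma nonneg_list_update_Max:
  fixes xs :: "real list"
  assumes "\<forall>a\<in>set xs. 0 \<le> a" "i < length xs" "xs ! i = Max (set xs)" "r \<le> Max (set xs)"
  shows "\<forall>a\<in>set (xs[i := xs ! i - r]). 0 \<le> a"
  using assms by (auto dest: set_update_subset_insert[THEN subsetD])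

lemma greedy_pair_sum_list:
  assumes "greedy [A, B] G" "A \<noteq> []" "B \<noteq> []" "\<forall>a\<in>set A. 0 \<le> a" "\<forall>b\<in>set B. 0 \<le> b"
    "sum_list A = sum_list B"
  shows "sum_list G = sum_list A \<and> (\<forall>g\<in>set G. 0 < g)"
  using assms
proof (induction rule: greedy_pair_induct)
  case (stop A B)
  then show ?case by (auto simp: min_def Max_eq_0_imp_sum_list_eq_0 split: if_splits)
next
  case (step A B G i j r)
  have "0 \<le> Max (set A)" "0 \<le> Max (set B)"
    using step.prems by (auto intro: order_trans[OF _ Max_ge])
  then have r: "0 < r" using step.hyps(1,2) by linarith
  have "\<forall>a\<in>set (A[i := A ! i - r]). 0 \<le> a"
    by (rule nonneg_list_update_Max) (use step in auto)
  moreover have "\<forall>b\<in>set (B[j := B ! j - r]). 0 \<le> b"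
    by (rule nonneg_list_update_Max) (use step in auto)
  ultimately show ?case
    using step r by (simp add: sum_list_list_update)
qed

lemma min_mass_from_greedy_step:
  fixes A B :: "real list"
  defines "a \<equiv> Max (set A)" and "b \<equiv> Max (set B)"
  assumes i: "i < length A" "A ! i = a" and j: "j < length B" "B ! j = b"
    and r: "r = min a b" and v: "0 < v"
  shows "min (mass_from A v) (mass_from B v) \<le>
    min (mass_from (A[i := A ! i - r]) v) (mass_from (B[j := B ! j - r]) v)
      + (if v \<le> r then r else 0) + (if \<bar>a - b\<bar> < v \<and> v \<le> r then \<bar>a - b\<bar> else 0)"
proof (cases "v \<le> r")
  case False
  then have "a < v \<or> b < v" using r by linarith
  moreover have "A \<noteq> []" "B \<noteq> []" using i j by auto
  ultimately have "min (mass_from A v) (mass_from B v) \<le> 0"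
    unfolding a_def b_def by (auto simp: mass_from_eq_0_if_Max_less)
  moreover have "0 \<le> min (mass_from (A[i := A ! i - r]) v) (mass_from (B[j := B ! j - r]) v)"
    using v by (simp add: mass_from_nonneg)
  ultimately have "min (mass_from A v) (mass_from B v)
      \<le> min (mass_from (A[i := A ! i - r]) v) (mass_from (B[j := B ! j - r]) v)"
    by linarith
  then show ?thesis using False by simp
next
  case True
  define A' B' where "A' = A[i := A ! i - r]" and "B' = B[j := B ! j - r]"
  have "v \<le> a" "v \<le> b" using True r by auto
  then have A': "mass_from A' v = mass_from A v - a + (if v \<le> a - r then a - r else 0)"
    and B': "mass_from B' v = mass_from B v - b + (if v \<le> b - r then b - r else 0)"
    using i j by (simp_all add: A'_def B'_def mass_from_list_update)
  define gap where "gap = (if \<bar>a - b\<bar> < v then \<bar>a - b\<bar> else 0)"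
  have "0 \<le> gap" by (simp add: gap_def)
  have "min (mass_from A v) (mass_from B v) \<le> min (mass_from A' v) (mass_from B' v) + r + gap"
  proof (cases "a \<le> b")
    case True
    then have "r = a" "\<bar>a - b\<bar> = b - a" using r by auto
    then have "mass_from A' v = mass_from A v - r" "mass_from B' v + gap = mass_from B v - r"
      using A' B' v by (simp_all add: gap_def)
    then show ?thesis using \<open>0 \<le> gap\<close> by (simp add: min_def)
  next
    case False
    then have "r = b" "\<bar>a - b\<bar> = a - b" using r by auto
    then have "mass_from B' v = mass_from B v - r" "mass_from A' v + gap = mass_from A v - r"
      using A' B' v by (simp_all add: gap_def)
    then show ?thesis using \<open>0 \<le> gap\<close> by (simp add: min_def)
  qed
  moreover have "(if v \<le> r then r else 0) + (if \<bar>a - b\<bar> < v \<and> v \<le> r then \<bar>a - b\<bar> else 0) = r + gap"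
    using True by (simp add: gap_def)
  ultimately show ?thesis unfolding A'_def B'_def by (simp only: add.assoc)
qed

lemma greedy_pair_mass_from:
  assumes "greedy [A, B] G" "A \<noteq> []" "B \<noteq> []"
  shows "\<exists>E. map fst E = G \<and> (\<forall>(r, \<rho>)\<in>set E. 0 \<le> \<rho>) \<and>
    (\<forall>v>0. min (mass_from A v) (mass_from B v) \<le> mass_from G v + gap_mass E v)"
  using assms
proof (induction rule: greedy_pair_induct)
  case (stop A B)
  have "min (mass_from A v) (mass_from B v) \<le> 0" if "0 < v" for v
    using stop that by (auto simp: min_def mass_from_eq_0_if_Max_less split: if_splits)
  then show ?case by (intro exI[of _ "[]"]) (simp add: gap_mass_def)
next
  case (step A B G i j r)
  then obtain E where E: "map fst E = G" "\<forall>(r, \<rho>)\<in>set E. 0 \<le> \<rho>"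
    "\<forall>v>0. min (mass_from (A[i := A ! i - r]) v) (mass_from (B[j := B ! j - r]) v)
       \<le> mass_from G v + gap_mass E v"
    by auto
  define \<rho> where "\<rho> = \<bar>Max (set A) - Max (set B)\<bar>"
  show ?case
  proof (intro exI[of _ "(r, \<rho>) # E"] conjI allI impI)
    fix v :: real
    assume "0 < v"
    then have "min (mass_from A v) (mass_from B v) \<le>
      min (mass_from (A[i := A ! i - r]) v) (mass_from (B[j := B ! j - r]) v)
        + (if v \<le> r then r else 0) + (if \<rho> < v \<and> v \<le> r then \<rho> else 0)"
      unfolding \<rho>_def by (rule min_mass_from_greedy_step[OF step.hyps(3-6,1)])
    moreover have "mass_from (r # G) v + gap_mass ((r, \<rho>) # E) v = mass_from G v + gap_mass E v
        + (if v \<le> r then r else 0) + (if \<rho> < v \<and> v \<le> r then \<rho> else 0)"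
      by (simp add: gap_mass_def)
    ultimately show "min (mass_from A v) (mass_from B v) \<le> mass_from (r # G) v + gap_mass ((r, \<rho>) # E) v"
      using E(3) \<open>0 < v\<close> by fastforce
  qed (use E in \<open>auto simp: \<rho>_def\<close>)
qed

section \<open>Sketches and the profile\<close>

lemma is_distr_member:
  assumes "is_distr p" "a \<in> set p"
  shows "0 \<le> a" "a \<le> 1"
  using assms member_le_sum_list[of a p] unfolding is_distr_def by auto

lemma mass_from_le_1: "is_distr p \<Longrightarrow> mass_from p v \<le> 1"
  using mass_from_le_sum_list[of p v] unfolding is_distr_def by auto

lemma sum_list_drop_antimono:
  fixes p :: "real list"
  assumes "\<forall>a\<in>set p. 0 \<le> a" "i \<le> j"
  shows "sum_list (drop j p) \<le> sum_list (drop i p)"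
proof -
  have "sum_list (drop i p) = sum_list (take (j - i) (drop i p)) + sum_list (drop j p)"
    using assms(2) by (metis append_take_drop_id drop_drop le_add_diff_inverse2 sum_list_append)
  moreover have "0 \<le> sum_list (take (j - i) (drop i p))"
    using assms(1) by (intro sum_list_nonneg) (auto dest: in_set_takeD in_set_dropD)
  ultimately show ?thesis by linarith
qed

lemma ex_sum_list_drop_bracket:
  fixes p :: "real list"
  shows "0 < x \<Longrightarrow> x \<le> sum_list p \<Longrightarrow>
    \<exists>i<length p. sum_list (drop (Suc i) p) < x \<and> x \<le> sum_list (drop i p)"
proof (induction p)
  case (Cons a p)
  show ?case
  proof (cases "sum_list p < x")
    case True
    then show ?thesis using Cons.prems by (intro exI[of _ 0]) auto
  next
    case False
    then obtain i where "i < length p" "sum_list (drop (Suc i) p) < x" "x \<le> sum_list (drop i p)"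
      using Cons by auto
    then show ?thesis by (intro exI[of _ "Suc i"]) auto
  qed
qed simp

lemma sketch_index:
  assumes "is_distr p" "0 < x" "x \<le> 1"
  obtains i where "i < length p" "sketch p x = p ! i"
    "sum_list (drop (Suc i) p) < x" "x \<le> sum_list (drop i p)"
proof -
  have nonneg: "\<forall>a\<in>set p. 0 \<le> a" and "x \<le> sum_list p"
    using assms by (simp_all add: is_distr_def)
  let ?bracket = "\<lambda>i. i < length p \<and> sum_list (drop (Suc i) p) < x \<and> x \<le> sum_list (drop i p)"
  obtain i where i: "?bracket i"
    using ex_sum_list_drop_bracket[OF assms(2) \<open>x \<le> sum_list p\<close>] by blast
  have unique: "j = i" if "?bracket j" for j
  proof (rule ccontr)
    assume "j \<noteq> i"
    then have "Suc j \<le> i \<or> Suc i \<le> j" by auto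
    then show False
    proof
      assume "Suc j \<le> i"
      then have "sum_list (drop i p) \<le> sum_list (drop (Suc j) p)" by (rule sum_list_drop_antimono[OF nonneg])
      then show False using i that by linarith
    next
      assume "Suc i \<le> j"
      then have "sum_list (drop j p) \<le> sum_list (drop (Suc i) p)" by (rule sum_list_drop_antimono[OF nonneg])
      then show False using i that by linarith
    qed
  qed
  have "(THE i. ?bracket i) = i" using i unique by (rule the_equality)
  then have "sketch p x = p ! i" by (simp add: sketch_def)
  with i show ?thesis by (intro that) auto
qed

lemma sketch_in_set: "is_distr p \<Longrightarrow> 0 < x \<Longrightarrow> x \<le> 1 \<Longrightarrow> sketch p x \<in> set p"
  by (metis nth_mem sketch_index)

lemma sketch_pos:
  assumes "is_distr p" "0 < x" "x \<le> 1"
  shows "0 < sketch p x"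
proof -
  obtain i where "i < length p" "sketch p x = p ! i"
    "sum_list (drop (Suc i) p) < x" "x \<le> sum_list (drop i p)"
    using sketch_index[OF assms] .
  then show ?thesis by (simp add: Cons_nth_drop_Suc[symmetric])
qed

lemma sorted_wrt_ge_take_drop:
  fixes p :: "real list"
  assumes "sorted_wrt (\<ge>) p" "i < length p"
  shows "\<forall>a\<in>set (take (Suc i) p). p ! i \<le> a" and "\<forall>a\<in>set (drop i p). a \<le> p ! i"
proof -
  show "\<forall>a\<in>set (take (Suc i) p). p ! i \<le> a"
    using assms by (auto simp: in_set_conv_nth sorted_wrt_iff_nth_less less_Suc_eq)
  show "\<forall>a\<in>set (drop i p). a \<le> p ! i"
  proof
    fix a assume "a \<in> set (drop i p)"
    then obtain k where "k < length p - i" "a = p ! (i + k)" by (auto simp: in_set_conv_nth)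
    then show "a \<le> p ! i" using assms(1) by (cases "k = 0") (auto simp: sorted_wrt_iff_nth_less)
  qed
qed

lemma sketch_ge_iff:
  assumes "is_distr p" "0 < x" "x \<le> 1" "0 < v"
  shows "v \<le> sketch p x \<longleftrightarrow> 1 - mass_from p v < x"
proof -
  obtain i where i: "i < length p" "sketch p x = p ! i"
    "sum_list (drop (Suc i) p) < x" "x \<le> sum_list (drop i p)"
    using sketch_index[OF assms(1-3)] .
  have nonneg: "\<forall>a\<in>set p. 0 \<le> a" and sorted: "sorted_wrt (\<ge>) p"
    using assms(1) by (auto simp: is_distr_def)
  note head_ge = sorted_wrt_ge_take_drop(1)[OF sorted i(1)]
    and tail_le = sorted_wrt_ge_take_drop(2)[OF sorted i(1)]
  have split: "mass_from p v = mass_from (take k p) v + mass_from (drop k p) v"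
    "sum_list (take k p) + sum_list (drop k p) = 1" for k
    using assms(1) unfolding is_distr_def
    by (metis append_take_drop_id mass_from_append sum_list_append)+
  show ?thesis
  proof
    assume "v \<le> sketch p x"
    then have "mass_from (take (Suc i) p) v = sum_list (take (Suc i) p)"
      using head_ge i(2) by (auto intro!: mass_from_eq_sum_list)
    then show "1 - mass_from p v < x"
      using split[of "Suc i"] mass_from_nonneg[of v "drop (Suc i) p"] assms(4) i(3) by linarith
  next
    assume "1 - mass_from p v < x"
    show "v \<le> sketch p x"
    proof (rule ccontr)
      assume "\<not> v \<le> sketch p x"
      then have "mass_from (drop i p) v = 0"
        using tail_le i(2) by (auto intro!: mass_from_eq_0)
      moreover have "mass_from (take i p) v \<le> sum_list (take i p)"
        using nonneg by (auto intro!: mass_from_le_sum_list dest: in_set_takeD)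
      ultimately show False
        using split[of i] i(4) \<open>1 - mass_from p v < x\<close> by linarith
    qed
  qed
qed

lemma profile_pair: "profile {p, q} x = min (sketch p x) (sketch q x)"
  unfolding profile_def by (cases "p = q") auto

section \<open>Integration against \<open>dv/v\<close> on \<open>(0,1]\<close>\<close>

definition dlog_integral :: "(real \<Rightarrow> real) \<Rightarrow> ennreal" where
  "dlog_integral f = (\<integral>\<^sup>+v. ennreal (indicator {0<..1} v * f v / v) \<partial>lborel)"

lemma borel_measurable_sum_list [measurable (raw)]:
  fixes f :: "'a \<Rightarrow> 'b \<Rightarrow> real"
  assumes "\<And>x. x \<in> set xs \<Longrightarrow> f x \<in> borel_measurable M"
  shows "(\<lambda>v. \<Sum>x\<leftarrow>xs. f x v) \<in> borel_measurable M"
  using assms by (induction xs) auto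

lemma borel_measurable_mass_from [measurable]: "mass_from xs \<in> borel_measurable borel"
  unfolding mass_from_def[abs_def] by measurable

lemma borel_measurable_mass_below [measurable]: "mass_below xs \<in> borel_measurable borel"
  unfolding mass_below_def[abs_def] by measurable

lemma borel_measurable_gap_mass [measurable]: "gap_mass E \<in> borel_measurable borel"
  unfolding gap_mass_def[abs_def] by measurable

lemma nn_integral_inverse_Ioc:
  fixes a b :: real
  assumes "0 < a" "a \<le> b"
  shows "(\<integral>\<^sup>+v. ennreal (indicator {a<..b} v / v) \<partial>lborel) = ennreal (ln b - ln a)"
proof -
  have "((\<lambda>v. 1 / v) has_integral (ln b - ln a)) {a..b}"
  proof (rule fundamental_theorem_of_calculus[OF assms(2)])
    fix x assume "x \<in> {a..b}"
    then have "0 < x" using assms(1) by auto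
    then show "(ln has_vector_derivative 1 / x) (at x within {a..b})"
      unfolding has_real_derivative_iff_has_vector_derivative[symmetric]
      by (auto intro!: derivative_eq_intros)
  qed
  then have "(\<integral>\<^sup>+v. ennreal (indicator {a..b} v * (1 / v)) \<partial>lborel) = ennreal (ln b - ln a)"
    using assms by (intro nn_integral_has_integral_lebesgue) auto
  moreover have "(\<integral>\<^sup>+v. ennreal (indicator {a<..b} v / v) \<partial>lborel) =
      (\<integral>\<^sup>+v. ennreal (indicator {a..b} v * (1 / v)) \<partial>lborel)"
    by (intro nn_integral_cong_AE eventually_mono[OF AE_lborel_singleton[of a]])
      (auto simp: indicator_def)
  ultimately show ?thesis by simp
qed

lemma dlog_integral_mono:
  assumes "\<And>v. 0 < v \<Longrightarrow> v \<le> 1 \<Longrightarrow> f v \<le> g v"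
  shows "dlog_integral f \<le> dlog_integral g"
  unfolding dlog_integral_def
  by (intro nn_integral_mono ennreal_leI) (auto simp: indicator_def divide_right_mono assms)

lemma dlog_integral_add:
  assumes "f \<in> borel_measurable borel" "g \<in> borel_measurable borel"
    and "\<And>v. 0 < v \<Longrightarrow> v \<le> 1 \<Longrightarrow> 0 \<le> f v" "\<And>v. 0 < v \<Longrightarrow> v \<le> 1 \<Longrightarrow> 0 \<le> g v"
  shows "dlog_integral (\<lambda>v. f v + g v) = dlog_integral f + dlog_integral g"
proof -
  have "ennreal (indicator {0<..1} v * (f v + g v) / v) =
      ennreal (indicator {0<..1} v * f v / v) + ennreal (indicator {0<..1} v * g v / v)" for v
    using assms(3,4)[of v] by (auto simp: indicator_def add_divide_distrib ennreal_plus)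
  then show ?thesis
    unfolding dlog_integral_def using assms(1,2) by (simp add: nn_integral_add)
qed

lemma dlog_integral_sum_list:
  assumes "\<And>x. x \<in> set xs \<Longrightarrow> f x \<in> borel_measurable borel"
    and "\<And>x v. x \<in> set xs \<Longrightarrow> 0 < v \<Longrightarrow> v \<le> 1 \<Longrightarrow> 0 \<le> f x v"
  shows "dlog_integral (\<lambda>v. \<Sum>x\<leftarrow>xs. f x v) = (\<Sum>x\<leftarrow>xs. dlog_integral (f x))"
  using assms
proof (induction xs)
  case Nil
  then show ?case by (simp add: dlog_integral_def)
next
  case (Cons x xs)
  have "(\<lambda>v. \<Sum>y\<leftarrow>xs. f y v) \<in> borel_measurable borel"
    using Cons.prems(1) by (intro borel_measurable_sum_list) auto
  then have "dlog_integral (\<lambda>v. f x v + (\<Sum>y\<leftarrow>xs. f y v)) =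
      dlog_integral (f x) + dlog_integral (\<lambda>v. \<Sum>y\<leftarrow>xs. f y v)"
    using Cons.prems by (intro dlog_integral_add) (auto intro!: sum_list_nonneg)
  with Cons show ?case by simp
qed

lemma dlog_integral_below_atom:
  fixes g :: real
  assumes "0 \<le> g" "g \<le> 1"
  shows "dlog_integral (\<lambda>v. if g < v then g else 0) = ennreal (g * ln (1 / g))"
proof (cases "g = 0")
  case True
  then have "(\<lambda>v. if g < v then g else 0) = (\<lambda>v. 0)" by auto
  with True show ?thesis by (simp add: dlog_integral_def)
next
  case False
  then have "0 < g" using assms(1) by simp
  have "dlog_integral (\<lambda>v. if g < v then g else 0) =
      (\<integral>\<^sup>+v. ennreal g * ennreal (indicator {g<..1} v / v) \<partial>lborel)"
    unfolding dlog_integral_def using \<open>0 < g\<close>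
    by (intro nn_integral_cong) (auto simp: indicator_def ennreal_mult[symmetric])
  also have "\<dots> = ennreal g * ennreal (ln 1 - ln g)"
    using \<open>0 < g\<close> assms(2) by (simp add: nn_integral_cmult nn_integral_inverse_Ioc)
  also have "\<dots> = ennreal (g * ln (1 / g))"
    using \<open>0 < g\<close> by (simp add: ennreal_mult'[symmetric] ln_div)
  finally show ?thesis .
qed

lemma mult_ln_inverse_nonneg:
  fixes g :: real
  assumes "0 \<le> g" "g \<le> 1"
  shows "0 \<le> g * ln (1 / g)"
proof (cases "g = 0")
  case False
  then have "1 \<le> 1 / g" using assms by simp
  then show ?thesis using assms(1) by (simp add: ln_ge_zero)
qed simp

lemma dlog_integral_mass_below:
  assumes "\<forall>g\<in>set G. 0 \<le> g \<and> g \<le> 1"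
  shows "dlog_integral (mass_below G) = ennreal (\<Sum>g\<leftarrow>G. g * ln (1 / g))"
proof -
  have "dlog_integral (mass_below G) = (\<Sum>g\<leftarrow>G. ennreal (g * ln (1 / g)))"
    unfolding mass_below_def[abs_def] using assms
    by (subst dlog_integral_sum_list) (auto intro!: arg_cong[where f = sum_list] dlog_integral_below_atom)
  also have "\<dots> = ennreal (\<Sum>g\<leftarrow>G. g * ln (1 / g))"
    using assms by (intro sum_list_ennreal) (auto intro: mult_ln_inverse_nonneg)
  finally show ?thesis .
qed

lemma mult_ln_div_le_div_exp:
  fixes \<rho> r :: real
  assumes "0 < \<rho>" "0 < r"
  shows "\<rho> * ln (r / \<rho>) \<le> r / exp 1"
proof -
  define y where "y = r / \<rho>"
  have "0 < y" using assms by (simp add: y_def)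
  then have "ln y - 1 \<le> y / exp 1 - 1"
    using ln_le_minus_one[of "y / exp 1"] by (simp add: ln_div)
  then have "\<rho> * ln y \<le> \<rho> * (y / exp 1)"
    using assms by (intro mult_left_mono) auto
  then show ?thesis using assms by (simp add: y_def)
qed

lemma dlog_integral_gap_atom:
  fixes r \<rho> :: real
  assumes "0 \<le> \<rho>" "0 \<le> r"
  shows "dlog_integral (\<lambda>v. if \<rho> < v \<and> v \<le> r then \<rho> else 0) \<le> ennreal (r / exp 1)"
proof (cases "0 < \<rho> \<and> \<rho> < r")
  case True
  have "dlog_integral (\<lambda>v. if \<rho> < v \<and> v \<le> r then \<rho> else 0) \<le>
      (\<integral>\<^sup>+v. ennreal \<rho> * ennreal (indicator {\<rho><..r} v / v) \<partial>lborel)"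
    unfolding dlog_integral_def using True
    by (intro nn_integral_mono) (auto simp: indicator_def ennreal_mult[symmetric])
  also have "\<dots> = ennreal (\<rho> * ln (r / \<rho>))"
    using True by (simp add: nn_integral_cmult nn_integral_inverse_Ioc ennreal_mult[symmetric] ln_div)
  also have "\<dots> \<le> ennreal (r / exp 1)"
    using True by (intro ennreal_leI mult_ln_div_le_div_exp) auto
  finally show ?thesis .
next
  case False
  then have "(if \<rho> < v \<and> v \<le> r then \<rho> else 0) = 0" for v
    using assms by auto
  then show ?thesis by (simp add: dlog_integral_def)
qed

lemma dlog_integral_gap_mass:
  assumes "\<forall>(r, \<rho>)\<in>set E. 0 \<le> \<rho> \<and> 0 \<le> r"
  shows "dlog_integral (gap_mass E) \<le> ennreal (sum_list (map fst E) / exp 1)"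
proof -
  have "dlog_integral (gap_mass E) =
      (\<Sum>e\<leftarrow>E. dlog_integral (\<lambda>v. if snd e < v \<and> v \<le> fst e then snd e else 0))"
    unfolding gap_mass_def[abs_def] case_prod_unfold using assms
    by (subst dlog_integral_sum_list) auto
  also have "\<dots> \<le> (\<Sum>e\<leftarrow>E. ennreal (fst e / exp 1))"
    using assms by (intro sum_list_mono dlog_integral_gap_atom) auto
  also have "\<dots> = ennreal (\<Sum>e\<leftarrow>E. fst e / exp 1)"
    using assms by (intro sum_list_ennreal) auto
  also have "(\<Sum>e\<leftarrow>E. fst e / exp 1) = sum_list (map fst E) / exp 1"
    by (induction E) (auto simp: add_divide_distrib)
  finally show ?thesis .
qed

section \<open>The entropy of the profile\<close>

lemma nn_integral_ln_inverse_layer_cake: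
  fixes P m :: "real \<Rightarrow> real"
  assumes m_measurable: "m \<in> borel_measurable borel"
    and P: "\<And>x. 0 < x \<Longrightarrow> x \<le> 1 \<Longrightarrow> 0 < P x \<and> P x \<le> 1"
    and m: "\<And>v. 0 < v \<Longrightarrow> v \<le> 1 \<Longrightarrow> 0 \<le> m v \<and> m v \<le> 1"
    and threshold: "\<And>x v. 0 < x \<Longrightarrow> x \<le> 1 \<Longrightarrow> 0 < v \<Longrightarrow> v \<le> P x \<longleftrightarrow> 1 - m v < x"
  shows "(\<lambda>x. indicator {0<..1} x * ln (1 / P x)) \<in> borel_measurable borel"
    and "(\<integral>\<^sup>+x. ennreal (indicator {0<..1} x * ln (1 / P x)) \<partial>lborel) = dlog_integral (\<lambda>v. 1 - m v)"
proof -
  define K where "K x v = ennreal (indicator {0<..1} x * indicator {0<..1} v * (if x \<le> 1 - m v then 1 else 0) / v)"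
    for x v :: real
  note m_measurable [measurable]
  have K_measurable: "case_prod K \<in> borel_measurable (lborel \<Otimes>\<^sub>M lborel)"
    unfolding K_def by measurable
  have inner_v: "(\<integral>\<^sup>+v. K x v \<partial>lborel) = ennreal (indicator {0<..1} x * ln (1 / P x))" for x
  proof (cases "0 < x \<and> x \<le> 1")
    case True
    then have "K x v = ennreal (indicator {P x<..1} v / v)" for v
      using threshold[of x v] P[of x] by (cases "0 < v \<and> v \<le> 1") (auto simp: K_def indicator_def not_le)
    then show ?thesis using True P[of x] by (simp add: nn_integral_inverse_Ioc ln_div)
  qed (auto simp: K_def)
  have inner_x: "(\<integral>\<^sup>+x. K x v \<partial>lborel) = ennreal (indicator {0<..1} v * (1 - m v) / v)" for v
  proof (cases "0 < v \<and> v \<le> 1")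
    case True
    then have "K x v = ennreal (1 / v) * indicator {0<..1 - m v} x" for x
      using m[of v] by (auto simp: K_def indicator_def)
    then show ?thesis
      using True m[of v] by (simp add: nn_integral_cmult_indicator ennreal_mult[symmetric])
  qed (auto simp: K_def)
  have "(\<lambda>x. \<integral>\<^sup>+v. K x v \<partial>lborel) \<in> borel_measurable lborel"
    using lborel.borel_measurable_nn_integral_fst[OF K_measurable] by simp
  moreover have "0 \<le> indicator {0<..1} x * ln (1 / P x)" for x
    using P[of x] by (auto simp: indicator_def)
  ultimately show "(\<lambda>x. indicator {0<..1} x * ln (1 / P x)) \<in> borel_measurable borel"
    unfolding inner_v by (simp add: measurable_lborel1)
  show "(\<integral>\<^sup>+x. ennreal (indicator {0<..1} x * ln (1 / P x)) \<partial>lborel) = dlog_integral (\<lambda>v. 1 - m v)"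
    using lborel_pair.Fubini'[OF K_measurable] by (simp add: inner_v inner_x dlog_integral_def)
qed

lemma has_integral_of_nn_integral_Ioc:
  fixes f :: "real \<Rightarrow> real"
  assumes "(\<lambda>x. indicator {a<..b} x * f x) \<in> borel_measurable borel"
    and "\<And>x. a < x \<Longrightarrow> x \<le> b \<Longrightarrow> 0 \<le> f x"
    and "(\<integral>\<^sup>+x. ennreal (indicator {a<..b} x * f x) \<partial>lborel) = ennreal R" "0 \<le> R"
  shows "(f has_integral R) {a..b}"
proof -
  have "((\<lambda>x. indicator {a<..b} x * f x) has_integral R) UNIV"
    using assms by (intro nn_integral_has_integral) (auto simp: indicator_def)
  moreover have "(\<lambda>x. indicator {a<..b} x * f x) = (\<lambda>x. if x \<in> {a<..b} then f x else 0)"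
    by (auto simp: indicator_def)
  ultimately have "(f has_integral R) {a<..b}"
    using has_integral_restrict_UNIV[of "{a<..b}" f R] by metis
  moreover have "negligible {x \<in> {a<..b} - {a..b}. f x \<noteq> 0}"
    by (rule negligible_subset[of "{}"]) auto
  moreover have "negligible {x \<in> {a..b} - {a<..b}. f x \<noteq> 0}"
    by (rule negligible_subset[of "{a}"]) auto
  ultimately show ?thesis using has_integral_spike_set_eq by blast
qed

lemma profile_entropy_pair:
  assumes p: "is_distr p" and q: "is_distr q"
  shows "dlog_integral (\<lambda>v. 1 - min (mass_from p v) (mass_from q v)) = ennreal (ln 2 * profile_entropy {p, q})"
    and "0 \<le> profile_entropy {p, q}"
proof -
  define m where "m v = min (mass_from p v) (mass_from q v)" for v
  have m_measurable: "m \<in> borel_measurable borel" unfolding m_def[abs_def] by measurable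
  have profile_range: "0 < profile {p, q} x \<and> profile {p, q} x \<le> 1" if "0 < x" "x \<le> 1" for x
    using that sketch_pos[OF p] sketch_pos[OF q] sketch_in_set[OF p] sketch_in_set[OF q]
      is_distr_member[OF p] is_distr_member[OF q]
    by (auto simp: profile_pair min_le_iff_disj)
  have m_range: "0 \<le> m v \<and> m v \<le> 1" if "0 < v" for v
    using that mass_from_le_1[OF p] mass_from_le_1[OF q]
    by (auto simp: m_def mass_from_nonneg min_le_iff_disj)
  have threshold: "v \<le> profile {p, q} x \<longleftrightarrow> 1 - m v < x" if "0 < x" "x \<le> 1" "0 < v" for x v
    using that sketch_ge_iff[OF p] sketch_ge_iff[OF q] by (auto simp: profile_pair m_def)
  note layer_cake = nn_integral_ln_inverse_layer_cake[OF m_measurable profile_range m_range threshold]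
  have below: "mass_below p v = 1 - mass_from p v" "mass_below q v = 1 - mass_from q v" for v
    using mass_below_add_mass_from[of p v] mass_below_add_mass_from[of q v] p q
    by (simp_all add: is_distr_def)
  have "dlog_integral (\<lambda>v. 1 - m v) \<le> dlog_integral (\<lambda>v. mass_below p v + mass_below q v)"
    using mass_from_le_1[OF p] mass_from_le_1[OF q]
    by (intro dlog_integral_mono) (auto simp: m_def below min_def)
  also have "\<dots> = dlog_integral (mass_below p) + dlog_integral (mass_below q)"
    using mass_from_le_1[OF p] mass_from_le_1[OF q] by (intro dlog_integral_add) (auto simp: below)
  also have "\<dots> < \<infinity>"
    using is_distr_member[OF p] is_distr_member[OF q] by (simp add: dlog_integral_mass_below)
  finally obtain R where R: "dlog_integral (\<lambda>v. 1 - m v) = ennreal R" "0 \<le> R"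
    by (cases "dlog_integral (\<lambda>v. 1 - m v)" rule: ennreal_cases) auto
  have "((\<lambda>x. ln (1 / profile {p, q} x)) has_integral R) {0..1}"
    using layer_cake R profile_range by (intro has_integral_of_nn_integral_Ioc) (auto simp: ln_div)
  then have "profile_entropy {p, q} = R / ln 2"
    unfolding profile_entropy_def log_def by (intro integral_unique has_integral_divide)
  then show "dlog_integral (\<lambda>v. 1 - min (mass_from p v) (mass_from q v)) = ennreal (ln 2 * profile_entropy {p, q})"
    and "0 \<le> profile_entropy {p, q}"
    using R by (simp_all add: m_def)
qed

section \<open>The bound for the greedy coupling\<close>

lemma ln_2_mult_entropy: "ln 2 * entropy G = (\<Sum>g\<leftarrow>G. g * ln (1 / g))"
  unfolding entropy_def by (induction G) (simp_all add: log_def distrib_left)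

lemma greedy_pair_distr:
  assumes "is_distr p" "is_distr q" "greedy [p, q] G"
  shows "sum_list G = 1" "\<forall>g\<in>set G. 0 \<le> g \<and> g \<le> 1"
proof -
  have "p \<noteq> []" "q \<noteq> []" using assms(1,2) by (auto simp: is_distr_def)
  then have "sum_list G = 1 \<and> (\<forall>g\<in>set G. 0 < g)"
    using greedy_pair_sum_list[OF assms(3)] assms(1,2) by (auto simp: is_distr_def)
  then show "sum_list G = 1" "\<forall>g\<in>set G. 0 \<le> g \<and> g \<le> 1"
    by (metis less_imp_le member_le_sum_list)+
qed

lemma dlog_integral_mass_below_greedy_le:
  assumes "is_distr p" "is_distr q" "greedy [p, q] G"
  shows "dlog_integral (mass_below G)
    \<le> dlog_integral (\<lambda>v. 1 - min (mass_from p v) (mass_from q v)) + ennreal (1 / exp 1)"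
proof -
  have "p \<noteq> []" "q \<noteq> []" using assms(1,2) by (auto simp: is_distr_def)
  then obtain E where E: "map fst E = G" "\<forall>(r, \<rho>)\<in>set E. 0 \<le> \<rho>"
    "\<forall>v>0. min (mass_from p v) (mass_from q v) \<le> mass_from G v + gap_mass E v"
    using greedy_pair_mass_from[OF assms(3)] by blast
  note G = greedy_pair_distr[OF assms]
  have E_range: "\<forall>(r, \<rho>)\<in>set E. 0 \<le> \<rho> \<and> 0 \<le> r"
    using E(1,2) G(2) by fastforce
  have "dlog_integral (mass_below G)
      \<le> dlog_integral (\<lambda>v. (1 - min (mass_from p v) (mass_from q v)) + gap_mass E v)"
  proof (rule dlog_integral_mono)
    fix v :: real
    assume "0 < v"
    then show "mass_below G v \<le> 1 - min (mass_from p v) (mass_from q v) + gap_mass E v"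
      using mass_below_add_mass_from[of G v] E(3) G(1) by fastforce
  qed
  also have "\<dots> = dlog_integral (\<lambda>v. 1 - min (mass_from p v) (mass_from q v)) + dlog_integral (gap_mass E)"
    using mass_from_le_1[OF assms(1)] gap_mass_nonneg[OF E(2)]
    by (intro dlog_integral_add) (auto simp: min_le_iff_disj)
  also have "dlog_integral (gap_mass E) \<le> ennreal (1 / exp 1)"
    using dlog_integral_gap_mass[OF E_range] E(1) G(1) by simp
  finally show ?thesis by simp
qed

theorem theorem2:
  fixes p q :: "real list" and G :: "real list"
  assumes "is_distr p" and "is_distr q"
    and "greedy [p, q] G"
  shows "entropy G \<le> profile_entropy {p, q} + log 2 (exp 1) / exp 1"
proof -
  have "ennreal (ln 2 * entropy G) = dlog_integral (mass_below G)"
    using greedy_pair_distr(2)[OF assms] by (simp add: ln_2_mult_entropy dlog_integral_mass_below)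
  also have "\<dots> \<le> ennreal (ln 2 * profile_entropy {p, q}) + ennreal (1 / exp 1)"
    using dlog_integral_mass_below_greedy_le[OF assms] profile_entropy_pair(1)[OF assms(1,2)] by simp
  finally have "ln 2 * entropy G \<le> ln 2 * profile_entropy {p, q} + 1 / exp 1"
    using profile_entropy_pair(2)[OF assms(1,2)] by (simp add: ennreal_plus[symmetric] del: ennreal_plus)
  then show ?thesis by (simp add: log_def field_simps)
qed

end
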